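(* Fix $C\in\mathbb C$ and let $f(x)=C/(x-1)^2\in\mathbb C[[x]]$. Let $b(\lambda,x)=\sum_{k\ge-1}b_k(x)\lambda^{-k-1}$, $b_{-1}=1$, $b_k\in\mathbb C[[x]]$, be the unique such series satisfying $b\,b_{xx}-\frac12b_x^2-2(\lambda-2f)b^2=-2\lambda$, and let $$R(\lambda,x)=\begin{pmatrix}\frac12b_x&b\\(\lambda-2f)b-\frac12b_{xx}&-\frac12b_x\end{pmatrix}.$$ Then $b(\lambda,x)$ depends only on $\zeta:=\lambda(x-1)^2$, namely $b=G_{1/2}(\zeta)$, and $$R=\begin{pmatrix}-\frac{C\lambda^{1/2}}{\zeta^{3/2}}G_{3/2}(\zeta)&G_{1/2}(\zeta)\\\frac{\lambda}{\zeta}\Bigl((\zeta-2C)G_{1/2}(\zeta)-\frac{3C}{\zeta}G_{3/2}(\zeta)-\frac{6C(C+1)}{\zeta^2}G_{5/2}(\zeta)\Bigr)&\frac{C\lambda^{1/2}}{\zeta^{3/2}}G_{3/2}(\zeta)\end{pmatrix},$$ where $\zeta^{3/2}:=\lambda^{3/2}(x-1)^3$, $\Delta:=1-8C$, and $$G_\alpha(\zeta):={}_3F_0\Bigl(\alpha,\alpha+\tfrac{\sqrt\Delta}2,\alpha-\tfrac{\sqrt\Delta}2;;\tfrac1\zeta\Bigr)=\sum_{k\ge0}\frac{(\alpha)_k(\alpha+\frac{\sqrt\Delta}2)_k(\alpha-\frac{\sqrt\Delta}2)_k}{k!}\zeta^{-k}.$$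
   Context: $(a)_k=a(a+1)\cdots(a+k-1)$ is the rising Pochhammer symbol; $G_\alpha$ is a formal series in $\zeta^{-1}$ whose coefficients are polynomials in $\Delta$ (hence in $C$). The matrix $R(\lambda,x)$ is the basic matrix resolvent of the KdV solution with initial data $f$, evaluated at $t_{>0}=0$. *)

theory Defs
  imports Complex_Main "HOL-Computational_Algebra.Formal_Power_Series"
    "HOL-Computational_Algebra.Formal_Laurent_Series"
begin

text \<open>Series in lambda^(-1) with coefficients in C[[x]] are modelled as
  complex fps fls: the Laurent variable fls_X is mu = lambda^(-1), so
  lambda = fls_X_inv; the inner fps variable fps_X is x.\<close>

lift_definition xderiv :: "complex fps fls \<Rightarrow> complex fps fls" is
  "\<lambda>f n. fps_deriv (f n)"
  by (simp add: eventually_mono)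

definition lam :: "complex fps fls" where
  "lam = fls_X_inv"

abbreviation xc :: "complex fps \<Rightarrow> complex fps fls" where
  "xc p \<equiv> fls_const p"

abbreviation cc :: "complex \<Rightarrow> complex fps fls" where
  "cc c \<equiv> fls_const (fps_const c)"

definition fpot :: "complex \<Rightarrow> complex fps" where
  "fpot C = fps_const C * inverse ((fps_X - 1) ^ 2)"

definition zeta :: "complex fps fls" where
  "zeta = lam * xc ((fps_X - 1) ^ 2)"

definition zeta_inv :: "complex fps fls" where
  "zeta_inv = fls_X * xc (inverse ((fps_X - 1) ^ 2))"

text \<open>lambda^(1/2) / zeta^(3/2) with zeta^(3/2) := lambda^(3/2) (x-1)^3,
  i.e. lambda^(-1) (x-1)^(-3).\<close>
definition lam_half_over_zeta32 :: "complex fps fls" where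
  "lam_half_over_zeta32 = fls_X * xc (inverse ((fps_X - 1) ^ 3))"

definition Gcoeff :: "complex \<Rightarrow> complex \<Rightarrow> nat \<Rightarrow> complex" where
  "Gcoeff C \<alpha> k =
     (let s = csqrt (1 - 8 * C) in
      pochhammer \<alpha> k * pochhammer (\<alpha> + s / 2) k * pochhammer (\<alpha> - s / 2) k / fact k)"

text \<open>G_alpha(zeta) = sum_k Gcoeff k * zeta^(-k), with
  zeta^(-k) = lambda^(-k) (x-1)^(-2k).\<close>
definition Gzeta :: "complex \<Rightarrow> complex \<Rightarrow> complex fps fls" where
  "Gzeta C \<alpha> = fps_to_fls (Abs_fps (\<lambda>k.
      fps_const (Gcoeff C \<alpha> k) * inverse ((fps_X - 1) ^ (2 * k))))"

end

theory Submission
  imports Defs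
begin

text \<open>The coefficients c_k (x - 1)^(-2k) of G = G_(1/2)(zeta) obey the three-term
  recurrence of the 3F0, which says exactly that G solves the linear equation
  b''' - 4 (lambda - 2f) b' + 4 f' b = 0. The left-hand side Q(b) of the defining equation has
  x-derivative b times that expression, so Q(G) does not depend on x. Since G and f/lambda are
  functions of zeta alone, Q(G) is moreover homogeneous of degree one in lambda; hence Q(G) is a
  constant multiple of lambda, and its leading coefficient shows Q(G) = -2 lambda.
  Conversely, if b differs from G, the lowest nonzero coefficient of b - G enters Q(b) - Q(G) in
  the next lower degree only through the term -2 lambda (b^2 - G^2), so it must vanish; thus
  b = G. The entries of R follow from d/dx G_alpha =
  -2 alpha (alpha^2 - Delta/4) lambda^(1/2) zeta^(-3/2) G_(alpha+1), the contiguity of 3F0 under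
  differentiation.\<close>

unbundle fps_syntax

text \<open>The library instantiates only semiring_char_0 for fps; fls_deriv_eq_0_iff needs
  ring_char_0 coefficients.\<close>
instance fps :: (ring_char_0) ring_char_0 ..

lemma fls_times_nth_lower_bounds:
  fixes f g :: "'a::comm_ring_1 fls"
  assumes "\<forall>i<a. f $$ i = 0" "\<forall>i<c. g $$ i = 0"
  shows "(f * g) $$ n = (\<Sum>i=a..n-c. f $$ i * g $$ (n - i))"
proof (cases "f = 0 \<or> g = 0")
  case True
  then show ?thesis by auto
next
  case False
  then have "a \<le> fls_subdegree f" "c \<le> fls_subdegree g"
    using assms nth_fls_subdegree_nonzero by (meson not_le)+
  have "(f * g) $$ n = (\<Sum>i=fls_subdegree f..n - fls_subdegree g. f $$ i * g $$ (n - i))"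
    by (rule fls_times_nth(2))
  also have "\<dots> = (\<Sum>i=a..n-c. f $$ i * g $$ (n - i))"
  proof (rule sum.mono_neutral_left)
    show "\<forall>i\<in>{a..n-c} - {fls_subdegree f..n - fls_subdegree g}.
        f $$ i * g $$ (n - i) = 0"
      by (auto simp: not_le)
  qed (use \<open>a \<le> fls_subdegree f\<close> \<open>c \<le> fls_subdegree g\<close> in auto)
  finally show ?thesis .
qed

lemma fls_times_nth_order:
  fixes f g :: "'a::comm_ring_1 fls"
  assumes "\<forall>i<n. f $$ i = 0" "\<forall>i<0. g $$ i = 0"
  shows "(f * g) $$ (n - 1) = 0" "(f * g) $$ n = f $$ n * g $$ 0"
  by (simp_all add: fls_times_nth_lower_bounds[OF assms])

lemma fls_X_mult_nth [simp]:
  fixes F :: "'a::{comm_monoid_add,mult_zero,monoid_mult} fls"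
  shows "(fls_X * F) $$ n = F $$ (n - 1)"
  by (simp add: fls_X_times_conv_shift)

lemma fls_eq_X_inv_if_X_deriv_eq_neg:
  fixes F :: "'a::{comm_ring_1, ring_1_no_zero_divisors, ring_char_0} fls"
  assumes "fls_X * fls_deriv F = - F"
  shows "F = fls_const (F $$ (-1)) * fls_X_inv"
proof -
  have "fls_deriv (fls_X * F) = 0"
    using assms by simp
  then have "fls_X * F = fls_const ((fls_X * F) $$ 0)"
    by (simp only: fls_deriv_eq_0_iff)
  then have "fls_X_inv * (fls_X * F) = fls_X_inv * fls_const (F $$ (-1))"
    by (simp add: fls_X_times_conv_shift)
  then show ?thesis
    by (simp add: fls_X_times_conv_shift fls_X_inv_times_conv_shift mult.commute)
qed

lemma cc_mult: "cc (a * b) = cc a * cc b"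
  by simp

lemma cc_add: "cc (a + b) = cc a + cc b"
  by (simp add: fls_plus_const)

lemma cc_numeral: "cc (numeral n) = numeral n"
  by (simp flip: fps_numeral_fps_const)

lemma cc_half_mult_2: "cc (1/2) * 2 = 1"
  by (simp add: fps_numeral_fps_const flip: fls_const_numeral)

lemma xderiv_nth [simp]: "xderiv F $$ n = fps_deriv (F $$ n)"
  by (simp add: xderiv.rep_eq)

lemma xderiv_add [simp]: "xderiv (F + G) = xderiv F + xderiv G"
  by (rule fls_eqI) simp

lemma xderiv_diff [simp]: "xderiv (F - G) = xderiv F - xderiv G"
  by (rule fls_eqI) simp

lemma xderiv_uminus [simp]: "xderiv (- F) = - xderiv F"
  by (rule fls_eqI) simp

lemma xderiv_const [simp]: "xderiv (fls_const p) = fls_const (fps_deriv p)"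
  by (rule fls_eqI) simp

lemma xderiv_0 [simp]: "xderiv 0 = 0"
  by (rule fls_eqI) simp

lemma xderiv_numeral [simp]: "xderiv (numeral k) = 0"
  by (metis fls_const_numeral xderiv_const fps_deriv_numeral fls_const_0)

lemma xderiv_lam [simp]: "xderiv lam = 0"
  by (rule fls_eqI) (simp add: lam_def)

lemma xderiv_X [simp]: "xderiv fls_X = 0"
  by (rule fls_eqI) simp

lemma xderiv_mult [simp]: "xderiv (F * G) = xderiv F * G + F * xderiv G"
proof (rule fls_eqI)
  fix n
  have F: "\<forall>i<fls_subdegree F. F $$ i = 0" "\<forall>i<fls_subdegree F. xderiv F $$ i = 0"
    and G: "\<forall>i<fls_subdegree G. G $$ i = 0" "\<forall>i<fls_subdegree G. xderiv G $$ i = 0"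
    by simp_all
  show "xderiv (F * G) $$ n = (xderiv F * G + F * xderiv G) $$ n"
    unfolding fls_plus_nth xderiv_nth fls_times_nth_lower_bounds[OF F(1) G(1)]
      fls_times_nth_lower_bounds[OF F(2) G(1)] fls_times_nth_lower_bounds[OF F(1) G(2)]
    by (simp add: fps_deriv_sum sum.distrib[symmetric] add.commute)
qed

lemma xderiv_fls_deriv: "xderiv (fls_deriv F) = fls_deriv (xderiv F)"
  by (rule fls_eqI) simp

lemma lam_mult_nth [simp]: "(lam * F) $$ n = F $$ (n + 1)"
  by (simp add: lam_def fls_X_inv_times_conv_shift)

definition xm1_inv :: "complex fps" where
  "xm1_inv = inverse (fps_X - 1)"

lemma xm1_mult_xm1_inv [simp]: "(fps_X - 1) * xm1_inv = 1"
  by (simp add: xm1_inv_def inverse_mult_eq_1')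

lemma inverse_xm1_power: "inverse ((fps_X - 1) ^ k) = xm1_inv ^ k"
  by (simp add: xm1_inv_def fps_inverse_power)

lemma fps_deriv_xm1_inv: "fps_deriv xm1_inv = - (xm1_inv ^ 2)"
  by (simp add: xm1_inv_def fps_inverse_deriv)

lemma xderiv_xc_xm1_inv: "xderiv (xc xm1_inv) = - (xc xm1_inv ^ 2)"
  by (simp add: fps_deriv_xm1_inv fls_const_power)

lemma fps_deriv_const_mult_xm1_inv_power:
  "fps_deriv (fps_const c * xm1_inv ^ m) = fps_const (- (of_nat m * c)) * xm1_inv ^ (m + 1)"
proof -
  have "fps_deriv (xm1_inv ^ m) = - (fps_const (of_nat m) * xm1_inv ^ (m + 1))"
  proof (cases m)
    case (Suc j)
    then have "fps_deriv (xm1_inv ^ m) = fps_const (of_nat m) * fps_deriv xm1_inv * xm1_inv ^ j"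
      by (simp only: fps_deriv_power diff_Suc_1)
    then show ?thesis
      by (simp add: fps_deriv_xm1_inv Suc mult.commute power2_eq_square flip: power_add)
  qed simp
  then show ?thesis
    by (simp flip: fps_const_mult fps_const_neg)
qed

lemma xm1_mult_const_mult_xm1_inv_power:
  "(fps_X - 1) * (fps_const c * xm1_inv ^ (m + 1)) = fps_const c * xm1_inv ^ m"
proof -
  have "(fps_X - 1) * (fps_const c * xm1_inv ^ (m + 1))
      = fps_const c * xm1_inv ^ m * ((fps_X - 1) * xm1_inv)"
    by (simp only: power_add power_one_right ac_simps)
  then show ?thesis by simp
qed

lemma const_mult_xm1_inv_power_mult:
  "fps_const a * xm1_inv ^ m * (fps_const b * xm1_inv ^ n) = fps_const (a * b) * xm1_inv ^ (m + n)"
  by (simp add: power_add ac_simps)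

lemma fpot_eq: "fpot C = fps_const C * xm1_inv ^ 2"
  by (simp add: fpot_def inverse_xm1_power)

lemma lam_half_over_zeta32_mult_nth:
  "(lam_half_over_zeta32 * F) $$ n = xm1_inv ^ 3 * F $$ (n - 1)"
  by (simp add: lam_half_over_zeta32_def inverse_xm1_power mult.assoc)

subsection \<open>Coefficients of G_alpha\<close>

lemma csqrt_diff_square:
  "(b + csqrt z / 2) * (b - csqrt z / 2) = b ^ 2 - z / 4"
  using power2_csqrt[of z] by (simp add: field_simps power2_eq_square)

lemma Gcoeff_Suc:
  "of_nat (Suc k) * Gcoeff C a (Suc k)
     = (a + of_nat k) * ((a + of_nat k) ^ 2 - (1 - 8 * C) / 4) * Gcoeff C a k"
  unfolding Gcoeff_def Let_def pochhammer_Suc fact_Suc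
    csqrt_diff_square[of "a + of_nat k", symmetric]
  by (simp add: field_simps del: of_nat_Suc)

lemma Gcoeff_Suc_shift:
  "of_nat (Suc k) * Gcoeff C a (Suc k) = a * (a ^ 2 - (1 - 8 * C) / 4) * Gcoeff C (a + 1) k"
  unfolding Gcoeff_def Let_def pochhammer_rec fact_Suc csqrt_diff_square[of a, symmetric]
  by (simp add: field_simps del: of_nat_Suc)

lemma Gzeta_nth_neg [simp]: "n < 0 \<Longrightarrow> Gzeta C a $$ n = 0"
  by (simp add: Gzeta_def)

lemma Gzeta_nth [simp]: "Gzeta C a $$ int k = fps_const (Gcoeff C a k) * xm1_inv ^ (2 * k)"
  by (simp add: Gzeta_def inverse_xm1_power)

lemma Gzeta_nth_0: "Gzeta C a $$ 0 = 1"
  using Gzeta_nth[of C a 0] by (simp add: Gcoeff_def)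

lemma xderiv_Gzeta:
  "xderiv (Gzeta C a)
     = - cc (2 * a * (a ^ 2 - (1 - 8 * C) / 4)) * lam_half_over_zeta32 * Gzeta C (a + 1)"
proof (rule fls_eqI)
  fix n :: int
  define P where "P = 2 * a * (a ^ 2 - (1 - 8 * C) / 4)"
  have rhs: "(- cc P * lam_half_over_zeta32 * Gzeta C (a + 1)) $$ n
      = - (fps_const P * (xm1_inv ^ 3 * Gzeta C (a + 1) $$ (n - 1)))"
    by (simp add: mult.assoc lam_half_over_zeta32_mult_nth)
  show "xderiv (Gzeta C a) $$ n = (- cc P * lam_half_over_zeta32 * Gzeta C (a + 1)) $$ n"
  proof (cases "n \<le> 0")
    case True
    then show ?thesis
      unfolding rhs by (cases "n = 0") (simp_all add: Gzeta_nth_0)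
  next
    case False
    define k where "k = nat (n - 1)"
    have n: "n = int (Suc k)"
      using False unfolding k_def by simp
    have scalar: "of_nat (2 * Suc k) * Gcoeff C a (Suc k) = P * Gcoeff C (a + 1) k"
      by (simp only: of_nat_mult of_nat_numeral mult.assoc Gcoeff_Suc_shift P_def)
    have "xderiv (Gzeta C a) $$ n
        = fps_const (- (of_nat (2 * Suc k) * Gcoeff C a (Suc k))) * xm1_inv ^ (2 * Suc k + 1)"
      by (simp only: n xderiv_nth Gzeta_nth fps_deriv_const_mult_xm1_inv_power)
    also have "\<dots>
        = - (fps_const P * (xm1_inv ^ 3 * (fps_const (Gcoeff C (a + 1) k) * xm1_inv ^ (2 * k))))"
    proof -
      have "2 * Suc k + 1 = 3 + 2 * k"
        by simp
      then have e: "xm1_inv ^ (2 * Suc k + 1) = xm1_inv ^ 3 * xm1_inv ^ (2 * k)"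
        by (simp only: power_add)
      show ?thesis
        unfolding scalar e fps_const_neg[symmetric] fps_const_mult[symmetric]
        by (simp only: mult_minus_left mult_minus_right ac_simps)
    qed
    also have "\<dots> = - (fps_const P * (xm1_inv ^ 3 * Gzeta C (a + 1) $$ (n - 1)))"
      by (simp add: n)
    finally show ?thesis
      unfolding rhs .
  qed
qed

lemma xderiv_Gzeta_half:
  "xderiv (Gzeta C (1/2)) = - cc (2 * C) * lam_half_over_zeta32 * Gzeta C (3/2)"
proof -
  have "2 * (1/2) * ((1/2) ^ 2 - (1 - 8 * C) / 4) = 2 * C" "1/2 + 1 = (3/2 :: complex)"
    by (simp_all add: field_simps power2_eq_square)
  then show ?thesis
    using xderiv_Gzeta[of C "1/2"] by (simp only:)
qed

lemma xderiv_Gzeta_three_halves: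
  "xderiv (Gzeta C (3/2)) = - cc (6 * (C + 1)) * lam_half_over_zeta32 * Gzeta C (5/2)"
proof -
  have "2 * (3/2) * ((3/2) ^ 2 - (1 - 8 * C) / 4) = 6 * (C + 1)" "3/2 + 1 = (5/2 :: complex)"
    by (simp_all add: field_simps power2_eq_square)
  then show ?thesis
    using xderiv_Gzeta[of C "3/2"] by (simp only:)
qed

lemma half_xderiv_Gzeta_half:
  "cc (1/2) * xderiv (Gzeta C (1/2)) = - cc C * lam_half_over_zeta32 * Gzeta C (3/2)"
  unfolding xderiv_Gzeta_half cc_mult cc_numeral
  using cc_half_mult_2 by algebra

lemma lower_left_entry_Gzeta_half:
  "(lam - 2 * xc (fpot C)) * Gzeta C (1/2) - cc (1/2) * xderiv (xderiv (Gzeta C (1/2)))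
     = lam * zeta_inv * ((zeta - cc (2 * C)) * Gzeta C (1/2)
         - cc (3 * C) * zeta_inv * Gzeta C (3/2)
         - cc (6 * C * (C + 1)) * zeta_inv ^ 2 * Gzeta C (5/2))"
proof -
  define y where "y = xc xm1_inv"
  have y: "xderiv y = - (y ^ 2)" "xc (fps_X - 1) * y = 1"
    unfolding y_def by (simp_all only: xderiv_xc_xm1_inv) simp
  have lam: "lam * fls_X = 1"
    by (simp add: lam_def fls_X_inv_times_conv_shift)
  have defs: "lam_half_over_zeta32 = fls_X * y ^ 3" "zeta_inv = fls_X * y ^ 2"
      "zeta = lam * xc (fps_X - 1) ^ 2" "xc (fpot C) = cc C * y ^ 2"
    by (simp_all add: y_def lam_half_over_zeta32_def zeta_inv_def zeta_def fpot_def
        inverse_xm1_power fls_const_power flip: fls_const_mult_const)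
  have G'': "xderiv (xderiv (Gzeta C (1/2)))
      = cc (2 * C) * (3 * fls_X * y ^ 4 * Gzeta C (3/2)
          + cc (6 * (C + 1)) * fls_X ^ 2 * y ^ 6 * Gzeta C (5/2))"
    unfolding xderiv_Gzeta_half
    by (simp add: xderiv_Gzeta_three_halves y defs algebra_simps eval_nat_numeral)
  show ?thesis
    unfolding G'' defs cc_mult cc_add cc_numeral fls_const_1
    using y(2) lam cc_half_mult_2 by algebra
qed

subsection \<open>Homogeneity in zeta\<close>

text \<open>With the Laurent variable mu = lambda^(-1), this is (x - 1) d/dx - 2 lambda d/dlambda,
  which annihilates every series in zeta = lambda (x - 1)^2.\<close>
definition euler :: "complex fps fls \<Rightarrow> complex fps fls" where
  "euler F = xc (fps_X - 1) * xderiv F + 2 * (fls_X * fls_deriv F)"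

lemma euler_add [simp]: "euler (F + G) = euler F + euler G"
  by (simp add: euler_def algebra_simps)

lemma euler_diff [simp]: "euler (F - G) = euler F - euler G"
  by (simp add: euler_def algebra_simps)

lemma euler_mult [simp]: "euler (F * G) = euler F * G + F * euler G"
  by (simp add: euler_def algebra_simps)

lemma euler_const [simp]: "euler (fls_const p) = xc ((fps_X - 1) * fps_deriv p)"
  by (simp add: euler_def)

lemma euler_numeral [simp]: "euler (numeral k) = 0"
  by (simp add: euler_def)

lemma euler_cc [simp]: "euler (cc c) = 0"
  by simp

lemma euler_lam [simp]: "euler lam = - 2 * lam"
proof -
  have "fls_X * fls_X_inv = (1 :: complex fps fls)"
    by (simp add: fls_X_times_conv_shift)
  then show ?thesis
    unfolding euler_def xderiv_lam by (simp add: lam_def power2_eq_square mult.assoc[symmetric])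
qed

lemma euler_xderiv: "euler (xderiv F) = xderiv (euler F) - xderiv F"
  by (simp add: euler_def xderiv_fls_deriv)

lemma euler_fpot: "euler (xc (fpot C)) = - 2 * xc (fpot C)"
proof -
  have "(fps_X - 1) * fps_deriv (fpot C)
      = (fps_X - 1) * (fps_const (- (2 * C)) * xm1_inv ^ (2 + 1))"
    unfolding fpot_eq fps_deriv_const_mult_xm1_inv_power by simp
  also have "\<dots> = fps_const (- (2 * C)) * xm1_inv ^ 2"
    by (rule xm1_mult_const_mult_xm1_inv_power)
  also have "\<dots> = - 2 * fpot C"
    by (simp add: fpot_eq fps_numeral_fps_const)
  finally show ?thesis
    by (simp flip: fls_const_numeral fls_const_uminus)
qed

lemma euler_Gzeta: "euler (Gzeta C a) = 0"
proof (rule fls_eqI)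
  fix n :: int
  show "euler (Gzeta C a) $$ n = 0 $$ n"
  proof (cases "n < 0")
    case False
    then obtain k where n: "n = int k"
      by (metis nonneg_int_cases not_less)
    have "euler (Gzeta C a) $$ n
        = (fps_X - 1) * fps_deriv (fps_const (Gcoeff C a k) * xm1_inv ^ (2 * k))
          + 2 * (of_int n * (fps_const (Gcoeff C a k) * xm1_inv ^ (2 * k)))"
      by (simp add: euler_def n)
    also have "\<dots> = fps_const (- (of_nat (2 * k) * Gcoeff C a k)) * xm1_inv ^ (2 * k)
        + fps_const (2 * of_nat k * Gcoeff C a k) * xm1_inv ^ (2 * k)"
      unfolding fps_deriv_const_mult_xm1_inv_power xm1_mult_const_mult_xm1_inv_power n
      by (simp add: fps_of_nat mult.assoc flip: fps_const_mult)
    also have "\<dots> = 0"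
      by (simp flip: distrib_right fps_const_add)
    finally show ?thesis
      by simp
  qed (simp add: euler_def)
qed

subsection \<open>The first integral\<close>

definition ode_op :: "complex \<Rightarrow> complex fps fls \<Rightarrow> complex fps fls" where
  "ode_op C F = xderiv (xderiv (xderiv F)) - 4 * (lam - 2 * xc (fpot C)) * xderiv F
     + 4 * xc (fps_deriv (fpot C)) * F"

definition first_integral :: "complex \<Rightarrow> complex fps fls \<Rightarrow> complex fps fls"
  where
  "first_integral C F = F * xderiv (xderiv F) - cc (1/2) * xderiv F ^ 2
     - 2 * (lam - 2 * xc (fpot C)) * F ^ 2"

lemma ode_op_nth:
  "ode_op C F $$ n = fps_deriv (fps_deriv (fps_deriv (F $$ n)))
     - 4 * (fps_deriv (F $$ (n + 1)) - 2 * (fpot C * fps_deriv (F $$ n)))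
     + 4 * (fps_deriv (fpot C) * F $$ n)"
  by (simp add: ode_op_def mult.assoc left_diff_distrib)

lemma xderiv_first_integral: "xderiv (first_integral C F) = F * ode_op C F"
  unfolding first_integral_def ode_op_def power2_eq_square
  using cc_half_mult_2 by simp algebra

lemma euler_first_integral:
  assumes "euler F = 0"
  shows "euler (first_integral C F) = - 2 * first_integral C F"
proof -
  have "euler (xderiv F) = - xderiv F" "euler (xderiv (xderiv F)) = - 2 * xderiv (xderiv F)"
    by (simp_all add: euler_xderiv assms)
  then show ?thesis
    unfolding first_integral_def power2_eq_square
    by (simp add: assms euler_fpot algebra_simps del: euler_const)
qed

lemma ode_op_Gzeta_half: "ode_op C (Gzeta C (1/2)) = 0"
proof (rule fls_eqI)
  fix n :: int
  let ?g = "Gcoeff C (1/2)"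
  show "ode_op C (Gzeta C (1/2)) $$ n = 0 $$ n"
  proof (cases "n < 0")
    case True
    then show ?thesis
      by (cases "n = -1") (simp_all add: ode_op_nth Gzeta_nth_0)
  next
    case False
    then obtain k where n: "n = int k"
      by (metis nonneg_int_cases not_less)
    have Suc_as_int: "int k + 1 = int (Suc k)"
      by simp
    have e: "2 * k + 1 + 1 + 1 = 2 * k + 3" "2 * Suc k + 1 = 2 * k + 3"
        "2 + (2 * k + 1) = 2 * k + 3" "2 + 1 + 2 * k = 2 * k + 3"
      by simp_all
    have lin: "fps_const a * Y - 4 * (fps_const b * Y - 2 * (fps_const c * Y))
        + 4 * (fps_const d * Y) = fps_const (a - 4 * (b - 2 * c) + 4 * d) * Y"
      for a b c d and Y :: "complex fps"
      by (simp add: fps_numeral_fps_const algebra_simps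
          flip: fps_const_add fps_const_mult fps_const_neg fps_const_sub)
    define S where
      "S = - (of_nat (2 * k + 1 + 1) * - (of_nat (2 * k + 1) * - (of_nat (2 * k) * ?g k)))
      - 4 * (- (of_nat (2 * Suc k) * ?g (Suc k)) - 2 * (C * - (of_nat (2 * k) * ?g k)))
      + 4 * (- (of_nat 2 * C) * ?g k)"
    have "ode_op C (Gzeta C (1/2)) $$ n = fps_const S * xm1_inv ^ (2 * k + 3)"
      unfolding ode_op_nth n Suc_as_int Gzeta_nth fpot_eq fps_deriv_const_mult_xm1_inv_power
        const_mult_xm1_inv_power_mult e S_def lin[symmetric] ..
    moreover have "S = 0"
      using Gcoeff_Suc[of k C "1/2"] unfolding S_def
      by (simp add: power2_eq_square) algebra
    ultimately show ?thesis
      by simp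
  qed
qed

lemma first_integral_Gzeta_half: "first_integral C (Gzeta C (1/2)) = - 2 * lam"
proof -
  let ?G = "Gzeta C (1/2)"
  let ?Q = "first_integral C ?G"
  have "xderiv ?Q = 0"
    by (simp add: xderiv_first_integral ode_op_Gzeta_half)
  then have "2 * (fls_X * fls_deriv ?Q) = 2 * - ?Q"
    using euler_first_integral[OF euler_Gzeta, of C C "1/2"] by (simp add: euler_def)
  then have "?Q = fls_const (?Q $$ (-1)) * fls_X_inv"
    by (intro fls_eq_X_inv_if_X_deriv_eq_neg) (metis mult_cancel_left zero_neq_numeral)
  moreover have "?Q $$ (-1) = - 2"
  proof -
    have G: "\<forall>i<0. ?G $$ i = 0" "\<forall>i<0. xderiv ?G $$ i = 0"
        "\<forall>i<0. xderiv (xderiv ?G) $$ i = 0"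
      by simp_all
    show ?thesis
      unfolding first_integral_def power2_eq_square
      using fls_times_nth_order[OF G(1) G(3)] fls_times_nth_order[OF G(2) G(2)]
        fls_times_nth_order[OF G(1) G(1)]
      by (simp add: Gzeta_nth_0 left_diff_distrib mult.assoc)
  qed
  ultimately show ?thesis
    by (simp add: lam_def)
qed

lemma first_integral_diff:
  "first_integral C H - first_integral C F
     = (H - F) * xderiv (xderiv H) + F * xderiv (xderiv (H - F))
       - cc (1/2) * (xderiv (H - F) * (xderiv H + xderiv F))
       - 2 * (lam - 2 * xc (fpot C)) * ((H - F) * (H + F))"
  by (simp add: first_integral_def power2_eq_square algebra_simps)

lemma first_integral_eq_imp_eq:
  assumes F: "\<forall>i<0. F $$ i = 0" and H: "\<forall>i<0. H $$ i = 0"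
    and lead: "H $$ 0 = F $$ 0" "F $$ 0 \<noteq> 0"
    and eq: "first_integral C H = first_integral C F"
  shows "H = F"
proof (rule ccontr)
  define D where "D = H - F"
  assume "H \<noteq> F"
  then have "D \<noteq> 0"
    by (simp add: D_def)
  define n where "n = fls_subdegree D"
  have D: "\<forall>i<n. D $$ i = 0" "\<forall>i<n. xderiv D $$ i = 0"
      "\<forall>i<n. xderiv (xderiv D) $$ i = 0"
    by (simp_all add: n_def)
  have low: "\<forall>i<0. xderiv (xderiv H) $$ i = 0"
      "\<forall>i<0. (xderiv H + xderiv F) $$ i = 0" "\<forall>i<0. (H + F) $$ i = 0"
    using F H by simp_all
  have "(first_integral C H - first_integral C F) $$ (n - 1) = - 2 * ((D * (H + F)) $$ n)"
    unfolding first_integral_diff D_def[symmetric]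
    using fls_times_nth_order(1)[OF D(1) low(1)] fls_times_nth_order(1)[OF D(3) F]
      fls_times_nth_order(1)[OF D(2) low(2)] fls_times_nth_order(1)[OF D(1) low(3)]
    by (simp add: left_diff_distrib mult.assoc mult.commute[of F])
  also have "\<dots> = - 4 * F $$ 0 * D $$ n"
    using fls_times_nth_order(2)[OF D(1) low(3)] lead(1) by simp
  finally have "F $$ 0 * D $$ n = 0"
    using eq by simp
  moreover have "D $$ n \<noteq> 0"
    using \<open>D \<noteq> 0\<close> by (simp add: n_def)
  ultimately show False
    using lead(2) by simp
qed

theorem theorem1p9:
  fixes C :: complex and b :: "complex fps fls"
  assumes b_shape: "\<forall>n::int. n < 0 \<longrightarrow> fls_nth b n = 0"
    and b_lead: "fls_nth b 0 = 1"
    and b_eq: "b * xderiv (xderiv b) - cc (1/2) * (xderiv b) ^ 2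
                 - 2 * (lam - 2 * xc (fpot C)) * b ^ 2 = - 2 * lam"
  shows "b = Gzeta C (1/2)
    \<and> cc (1/2) * xderiv b
        = - cc C * lam_half_over_zeta32 * Gzeta C (3/2)
    \<and> b = Gzeta C (1/2)
    \<and> (lam - 2 * xc (fpot C)) * b - cc (1/2) * xderiv (xderiv b)
        = lam * zeta_inv * ((zeta - cc (2 * C)) * Gzeta C (1/2)
             - cc (3 * C) * zeta_inv * Gzeta C (3/2)
             - cc (6 * C * (C + 1)) * zeta_inv ^ 2 * Gzeta C (5/2))
    \<and> - (cc (1/2) * xderiv b)
        = cc C * lam_half_over_zeta32 * Gzeta C (3/2)"
proof -
  have "b = Gzeta C (1/2)"
  proof (rule first_integral_eq_imp_eq)
    have "first_integral C b = - 2 * lam"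
      unfolding first_integral_def by (rule b_eq)
    then show "first_integral C b = first_integral C (Gzeta C (1/2))"
      by (simp add: first_integral_Gzeta_half)
  qed (use b_shape b_lead in \<open>simp_all add: Gzeta_nth_0\<close>)
  then show ?thesis
    using half_xderiv_Gzeta_half[of C] lower_left_entry_Gzeta_half[of C] by simp
qed

end
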